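(* Let $W=x_1^{a_1}+\dots+x_N^{a_N}$ with all $a_i>2$. The genus-zero potentials $\mathcal F^{\rm FJRW}_{0,W}$ and $\mathcal F^{\rm SG}_{0,W^T,\zeta}$ are each completely determined (via the pairing, the ring structure, the dimension and integer-degree vanishing conditions, and the WDVV equations) by the Frobenius algebra structure and the correlators $\langle x_j,x_j,x_j^{a_j-2},\prod_{i=1}^Nx_i^{a_i-2}\rangle$, $j=1,\dots,N$ (on the A-side, with insertions replaced by their images under Krawitz's map $\Psi$).
   Context: Here $W^T=W$. $\mathcal F^{\rm FJRW}_{0,W}$ is the genus-zero primary FJRW prepotential of $(W,G_W)$, $G_W$ the maximal diagonal symmetry group; $\mathcal F^{\rm SG}_{0,W^T,\zeta}$ is the Saito–Givental prepotential (in flat coordinates) of the primitive form $\zeta$ associated with the standard good basis $\{\prod x_i^{r_i}d^Nx: 0\le r_i\le a_i-2\}$. $\Psi:\mathrm{Jac}(W)\to\mathcal H_W$ is Krawitz's Frobenius algebra isomorphism, $\Psi(x_i)$ = generator of the narrow sector $\rho_iJ_W$, where $\rho_i=(1,\dots,e^{2\pi\sqrt{-1}/a_i},\dots,1)$ and $J_W=(e^{2\pi\sqrt{-1}/a_1},\dots,e^{2\pi\sqrt{-1}/a_N})$. The WDVV equations give, for any insertions, $\langle\xi_1,\dots,\xi_{k-3},\gamma,\delta,\epsilon\star\phi\rangle=\langle\xi,\gamma,\epsilon,\delta\star\phi\rangle+\langle\xi,\gamma\star\epsilon,\delta,\phi\rangle-\langle\xi,\gamma\star\delta,\epsilon,\phi\rangle+S$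 with $S$ a combination of correlators with fewer than $k$ insertions ($S=0$ if $k=4$). *)

theory Defs
  imports Complex_Main "HOL-Library.Multiset"
begin

text \<open>Fermat polynomial W = x_0^(a 0) + ... + x_(N-1)^(a (N-1)).
  A basis element of Jac(W) (resp. its image under Krawitz's map Psi in the
  FJRW state space) is the monomial x^r, encoded by its exponent vector
  r :: nat => nat with 0 <= r i <= a i - 2 for i < N and r i = 0 for i >= N.\<close>

definition fbasis :: "nat \<Rightarrow> (nat \<Rightarrow> nat) \<Rightarrow> (nat \<Rightarrow> nat) set" where
  "fbasis N a = {r. (\<forall>i<N. r i \<le> a i - 2) \<and> (\<forall>i\<ge>N. r i = 0)}"

definition funit :: "nat \<Rightarrow> nat" where "funit = (\<lambda>_. 0)"

definition fxpow :: "nat \<Rightarrow> nat \<Rightarrow> (nat \<Rightarrow> nat)" where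
  "fxpow j k = (\<lambda>i. if i = j then k else 0)"

definition ftop :: "nat \<Rightarrow> (nat \<Rightarrow> nat) \<Rightarrow> (nat \<Rightarrow> nat)" where
  "ftop N a = (\<lambda>i. if i < N then a i - 2 else 0)"

text \<open>Degree of x^r (weights q_i = 1/a_i) and central charge c-hat.\<close>
definition fdeg :: "nat \<Rightarrow> (nat \<Rightarrow> nat) \<Rightarrow> (nat \<Rightarrow> nat) \<Rightarrow> rat" where
  "fdeg N a r = (\<Sum>i<N. of_nat (r i) / of_nat (a i))"

definition fchat :: "nat \<Rightarrow> (nat \<Rightarrow> nat) \<Rightarrow> rat" where
  "fchat N a = (\<Sum>i<N. 1 - 2 / of_nat (a i))"

text \<open>Genus-zero primary correlators are encoded as a function on multisets of
  basis elements (symmetry of correlators); the value on a multiset M with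
  size M >= 3 is the correlator with insertions M (Taylor coefficient of the
  potential, up to the symmetry factor).
  The Frobenius algebra structure: pairing eta(x^r, x^s) = c if r + s = top,
  else 0 (c \<noteq> 0), product x^r * x^s = x^(r+s) if r+s stays in the basis,
  else 0.  Hence the three-point correlators are
  <x^r, x^s, x^t> = eta(x^r * x^s, x^t) = c * [r + s + t = top].\<close>

definition three_point :: "nat \<Rightarrow> (nat \<Rightarrow> nat) \<Rightarrow> complex \<Rightarrow>
    (nat \<Rightarrow> nat) \<Rightarrow> (nat \<Rightarrow> nat) \<Rightarrow> (nat \<Rightarrow> nat) \<Rightarrow> complex" where
  "three_point N a c r s t = (if (\<lambda>i. r i + s i + t i) = ftop N a then c else 0)"

text \<open>Dual basis element with respect to eta: eta^(e,f) = (1/c) [e + f = top].\<close>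
definition fdual :: "nat \<Rightarrow> (nat \<Rightarrow> nat) \<Rightarrow> (nat \<Rightarrow> nat) \<Rightarrow> (nat \<Rightarrow> nat)" where
  "fdual N a e = (\<lambda>i. ftop N a i - e i)"

definition subins :: "'b list \<Rightarrow> nat set \<Rightarrow> 'b multiset" where
  "subins xs I = image_mset (\<lambda>k. xs ! k) (mset_set I)"

definition wdvv_side :: "nat \<Rightarrow> (nat \<Rightarrow> nat) \<Rightarrow> complex \<Rightarrow> ((nat \<Rightarrow> nat) multiset \<Rightarrow> complex) \<Rightarrow>
   (nat \<Rightarrow> nat) list \<Rightarrow> (nat \<Rightarrow> nat) \<Rightarrow> (nat \<Rightarrow> nat) \<Rightarrow> (nat \<Rightarrow> nat) \<Rightarrow> (nat \<Rightarrow> nat) \<Rightarrow> complex" where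
  "wdvv_side N a c corr xs al be ga de =
     (\<Sum>I\<in>Pow {..<length xs}. \<Sum>e\<in>fbasis N a.
        corr (subins xs I + {#al, be, e#}) * (1 / c) *
        corr (subins xs ({..<length xs} - I) + {#fdual N a e, ga, de#}))"

text \<open>A genus-zero correlator system for the Fermat Frobenius algebra with pairing
  constant c, satisfying: the ring structure (3-point correlators), the flat
  identity / string axiom, the dimension (degree) axiom, the integer-degree
  (selection rule) axiom, and WDVV.\<close>
definition fermat_g0_system :: "nat \<Rightarrow> (nat \<Rightarrow> nat) \<Rightarrow> complex \<Rightarrow>
    ((nat \<Rightarrow> nat) multiset \<Rightarrow> complex) \<Rightarrow> bool" where
  "fermat_g0_system N a c corr \<longleftrightarrow>
     (\<forall>r\<in>fbasis N a. \<forall>s\<in>fbasis N a. \<forall>t\<in>fbasis N a.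
        corr {#r, s, t#} = three_point N a c r s t) \<and>
     (\<forall>M. set_mset M \<subseteq> fbasis N a \<and> size M \<ge> 3 \<longrightarrow> corr (add_mset funit M) = 0) \<and>
     (\<forall>M. set_mset M \<subseteq> fbasis N a \<and> size M \<ge> 3 \<and> corr M \<noteq> 0 \<longrightarrow>
        (\<Sum>r\<in>#M. fdeg N a r) = fchat N a + of_nat (size M) - 3) \<and>
     (\<forall>M. set_mset M \<subseteq> fbasis N a \<and> size M \<ge> 3 \<and> corr M \<noteq> 0 \<longrightarrow>
        (\<forall>i<N. a i dvd (\<Sum>r\<in>#M. r i) + 2)) \<and>
     (\<forall>xs al be ga de. set xs \<subseteq> fbasis N a \<and>
        al \<in> fbasis N a \<and> be \<in> fbasis N a \<and> ga \<in> fbasis N a \<and> de \<in> fbasis N a \<longrightarrow>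
        wdvv_side N a c corr xs al be ga de = wdvv_side N a c corr xs al ga be de)"

end

theory Submission
  imports Defs
begin

text \<open>It suffices to show that the difference of two such systems vanishes, by induction on the
  number of insertions and, for a fixed number, downwards on the sum of the squared total degrees
  of the insertions. Correlators containing the unit or violating the degree and selection rules
  vanish. If at least three insertions have total degree at least 2, write the lightest of them as
  x_i \<phi> and apply WDVV to (\<alpha>, \<beta>, x_i, \<phi>): every other term has fewer insertions or a
  larger sum of squared degrees. Otherwise the selection rules force the shape
  \<open>\<langle>x_j, x_j, u, v\<rangle>\<close> with u v = x_j^(a_j-2) \<Prod>_i x_i^(a_i-2), and WDVV moves the factors x_i,
  i \<noteq> j, from u to v one at a time until the given correlator
  \<open>\<langle>x_j, x_j, x_j^(a_j-2), \<Prod>_i x_i^(a_i-2)\<rangle>\<close> is reached.\<close>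

definition mmul :: "(nat \<Rightarrow> nat) \<Rightarrow> (nat \<Rightarrow> nat) \<Rightarrow> nat \<Rightarrow> nat" where
  "mmul r s = (\<lambda>i. r i + s i)"

definition tdeg :: "nat \<Rightarrow> (nat \<Rightarrow> nat) \<Rightarrow> nat" where
  "tdeg N r = (\<Sum>i<N. r i)"

lemma finite_fbasis: "finite (fbasis N a)"
proof -
  let ?B = "\<Sum>i<N. a i"
  let ?F = "{r. \<forall>i. (i \<in> {..<N} \<longrightarrow> r i \<in> {..?B}) \<and> (i \<notin> {..<N} \<longrightarrow> r i = 0)}"
  have "fbasis N a \<subseteq> ?F"
  proof
    fix r assume r: "r \<in> fbasis N a"
    have "r i \<le> ?B" if "i < N" for i
    proof -
      have "r i \<le> a i" using r that by (auto simp: fbasis_def intro: order_trans)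
      also have "a i \<le> ?B" using that by (intro member_le_sum) auto
      finally show ?thesis .
    qed
    then show "r \<in> ?F" using r by (auto simp: fbasis_def)
  qed
  moreover have "finite ?F" by (rule finite_set_of_finite_funs) auto
  ultimately show ?thesis by (rule finite_subset)
qed

lemma fxpow_in_fbasis: "j < N \<Longrightarrow> k \<le> a j - 2 \<Longrightarrow> fxpow j k \<in> fbasis N a"
  by (auto simp: fbasis_def fxpow_def)

lemma fdual_in_fbasis: "e \<in> fbasis N a \<Longrightarrow> fdual N a e \<in> fbasis N a"
  by (auto simp: fbasis_def fdual_def ftop_def)

lemma fdual_fdual: "e \<in> fbasis N a \<Longrightarrow> fdual N a (fdual N a e) = e"
  by (auto simp: fbasis_def fdual_def ftop_def fun_eq_iff)

lemma tdeg_mmul: "tdeg N (mmul r s) = tdeg N r + tdeg N s"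
  by (simp add: tdeg_def mmul_def sum.distrib)

lemma tdeg_fxpow_1: "i < N \<Longrightarrow> tdeg N (fxpow i 1) = 1"
  by (simp add: tdeg_def fxpow_def)

lemma tdeg_le_sum: "r \<in> fbasis N a \<Longrightarrow> tdeg N r \<le> (\<Sum>i<N. a i)"
  unfolding tdeg_def by (intro sum_mono) (auto simp: fbasis_def intro: order_trans)

lemma tdeg_eq_0_imp_funit: "r \<in> fbasis N a \<Longrightarrow> tdeg N r = 0 \<Longrightarrow> r = funit"
  by (auto simp: tdeg_def fbasis_def funit_def fun_eq_iff) (metis lessThan_iff not_le)

lemma three_point_eq_top_iff_left:
  assumes "r \<in> fbasis N a" "s \<in> fbasis N a" "e \<in> fbasis N a"
  shows "(\<lambda>i. r i + s i + e i) = ftop N a \<longleftrightarrow>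
         mmul r s \<in> fbasis N a \<and> e = fdual N a (mmul r s)"
proof
  assume "(\<lambda>i. r i + s i + e i) = ftop N a"
  then have top: "\<And>i. r i + s i + e i = ftop N a i" by (simp add: fun_eq_iff)
  have "mmul r s \<in> fbasis N a"
    using top assms unfolding fbasis_def mmul_def ftop_def
    by (auto, metis le_add1)
  moreover have "e = fdual N a (mmul r s)"
    using top by (simp add: fun_eq_iff fdual_def mmul_def) (metis add_diff_cancel_left')
  ultimately show "mmul r s \<in> fbasis N a \<and> e = fdual N a (mmul r s)" by simp
qed (auto simp: fun_eq_iff fbasis_def mmul_def fdual_def ftop_def)

lemma three_point_eq_top_iff_right:
  assumes "s \<in> fbasis N a" "t \<in> fbasis N a" "e \<in> fbasis N a"
  shows "(\<lambda>i. fdual N a e i + s i + t i) = ftop N a \<longleftrightarrow>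
         mmul s t \<in> fbasis N a \<and> e = mmul s t"
proof
  assume "(\<lambda>i. fdual N a e i + s i + t i) = ftop N a"
  then have top: "\<And>i. fdual N a e i + s i + t i = ftop N a i" by (simp add: fun_eq_iff)
  have "e = mmul s t"
  proof
    fix i show "e i = mmul s t i"
      using top[of i] assms(3) by (cases "i < N") (auto simp: fdual_def mmul_def ftop_def fbasis_def)
  qed
  then show "mmul s t \<in> fbasis N a \<and> e = mmul s t" using assms(3) by simp
qed (auto simp: fun_eq_iff fbasis_def mmul_def fdual_def ftop_def)

lemma subins_all: "subins xs {..<length xs} = mset xs"
proof -
  have "subins xs {..<length xs} = image_mset (nth xs) (mset [0..<length xs])"
    by (simp add: subins_def mset_set_upto_eq_mset_upto)
  also have "\<dots> = mset (map (nth xs) [0..<length xs])" by simp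
  also have "\<dots> = mset xs" by (simp add: map_nth)
  finally show ?thesis .
qed

lemma subins_empty [simp]: "subins xs {} = {#}"
  by (simp add: subins_def)

lemma size_subins: "finite I \<Longrightarrow> size (subins xs I) = card I"
  by (simp add: subins_def)

lemma set_subins: "I \<subseteq> {..<length xs} \<Longrightarrow> set_mset (subins xs I) \<subseteq> set xs"
  unfolding subins_def by (auto dest!: elem_mset_set[THEN iffD1, rotated] intro!: nth_mem
       simp: finite_subset[OF _ finite_lessThan])

lemma fermat_g0_system_three_point:
  "fermat_g0_system N a c corr \<Longrightarrow> r \<in> fbasis N a \<Longrightarrow> s \<in> fbasis N a \<Longrightarrow>
   t \<in> fbasis N a \<Longrightarrow> corr {#r, s, t#} = three_point N a c r s t"
  by (simp add: fermat_g0_system_def)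

lemma fermat_g0_system_unit:
  assumes "fermat_g0_system N a c corr" "set_mset M \<subseteq> fbasis N a" "4 \<le> size M" "funit \<in># M"
  shows "corr M = 0"
proof -
  obtain M' where M': "M = add_mset funit M'" using assms(4) by (metis insert_DiffM)
  then have "set_mset M' \<subseteq> fbasis N a" "3 \<le> size M'" using assms(2,3) by auto
  then show ?thesis using assms(1) M' unfolding fermat_g0_system_def by blast
qed

lemma fermat_g0_system_wdvv:
  "fermat_g0_system N a c corr \<Longrightarrow> set xs \<subseteq> fbasis N a \<Longrightarrow>
   al \<in> fbasis N a \<Longrightarrow> be \<in> fbasis N a \<Longrightarrow> ga \<in> fbasis N a \<Longrightarrow> de \<in> fbasis N a \<Longrightarrow>
   wdvv_side N a c corr xs al be ga de = wdvv_side N a c corr xs al ga be de"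
  unfolding fermat_g0_system_def by blast

lemma corr_eq_size_3:
  assumes "fermat_g0_system N a c corr1" "fermat_g0_system N a c corr2"
    and "set_mset M \<subseteq> fbasis N a" "size M = 3"
  shows "corr1 M = corr2 M"
proof -
  obtain r s t where "M = {#r, s, t#}"
    using \<open>size M = 3\<close> by (metis One_nat_def numeral_3_eq_3 size_mset_SucE size_eq_0_iff_empty
        add_mset_add_single union_commute)
  then show ?thesis
    using assms(3) fermat_g0_system_three_point[OF assms(1)] fermat_g0_system_three_point[OF assms(2)]
    by auto
qed

section \<open>WDVV with a product of two insertions\<close>

text \<open>A product of basis monomials leaving fbasis is zero in the Jacobian algebra; accordingly
  ins_corr is 0 as soon as an insertion lies outside fbasis.\<close>

definition ins_corr :: "nat \<Rightarrow> (nat \<Rightarrow> nat) \<Rightarrow> ((nat \<Rightarrow> nat) multiset \<Rightarrow> complex) \<Rightarrow>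
    (nat \<Rightarrow> nat) list \<Rightarrow> (nat \<Rightarrow> nat) \<Rightarrow> (nat \<Rightarrow> nat) \<Rightarrow> (nat \<Rightarrow> nat) \<Rightarrow> complex" where
  "ins_corr N a corr xs x y z =
     (if x \<in> fbasis N a \<and> y \<in> fbasis N a \<and> z \<in> fbasis N a
      then corr (mset xs + {#x, y, z#}) else 0)"

definition wdvv_term :: "nat \<Rightarrow> (nat \<Rightarrow> nat) \<Rightarrow> complex \<Rightarrow> ((nat \<Rightarrow> nat) multiset \<Rightarrow> complex) \<Rightarrow>
    (nat \<Rightarrow> nat) list \<Rightarrow> (nat \<Rightarrow> nat) \<Rightarrow> (nat \<Rightarrow> nat) \<Rightarrow> (nat \<Rightarrow> nat) \<Rightarrow> (nat \<Rightarrow> nat) \<Rightarrow>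
    nat set \<Rightarrow> complex" where
  "wdvv_term N a c corr xs al be ga de I = (\<Sum>e\<in>fbasis N a.
     corr (subins xs I + {#al, be, e#}) * (1 / c) *
     corr (subins xs ({..<length xs} - I) + {#fdual N a e, ga, de#}))"

lemma wdvv_term_empty:
  assumes sys: "fermat_g0_system N a c corr" and "c \<noteq> 0"
    and S: "al \<in> fbasis N a" "be \<in> fbasis N a" "ga \<in> fbasis N a" "de \<in> fbasis N a"
  shows "wdvv_term N a c corr xs al be ga de {} = ins_corr N a corr xs (mmul al be) ga de"
proof -
  let ?e0 = "fdual N a (mmul al be)"
  have "wdvv_term N a c corr xs al be ga de {} = (\<Sum>e\<in>fbasis N a.
      if e = ?e0 then ins_corr N a corr xs (mmul al be) ga de else 0)"
    unfolding wdvv_term_def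
  proof (rule sum.cong[OF refl])
    fix e assume e: "e \<in> fbasis N a"
    show "corr (subins xs {} + {#al, be, e#}) * (1 / c) *
            corr (subins xs ({..<length xs} - {}) + {#fdual N a e, ga, de#})
        = (if e = ?e0 then ins_corr N a corr xs (mmul al be) ga de else 0)"
      using fermat_g0_system_three_point[OF sys S(1,2) e] three_point_eq_top_iff_left[OF S(1,2) e]
        \<open>c \<noteq> 0\<close> S fdual_fdual
      by (auto simp: three_point_def subins_all ins_corr_def)
  qed
  also have "\<dots> = ins_corr N a corr xs (mmul al be) ga de"
    using fdual_in_fbasis fdual_fdual by (simp add: sum.delta[OF finite_fbasis] ins_corr_def)
  finally show ?thesis .
qed

lemma wdvv_term_all:
  assumes sys: "fermat_g0_system N a c corr" and "c \<noteq> 0"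
    and S: "al \<in> fbasis N a" "be \<in> fbasis N a" "ga \<in> fbasis N a" "de \<in> fbasis N a"
  shows "wdvv_term N a c corr xs al be ga de {..<length xs} = ins_corr N a corr xs al be (mmul ga de)"
proof -
  have "wdvv_term N a c corr xs al be ga de {..<length xs} = (\<Sum>e\<in>fbasis N a.
      if e = mmul ga de then ins_corr N a corr xs al be (mmul ga de) else 0)"
    unfolding wdvv_term_def
  proof (rule sum.cong[OF refl])
    fix e assume e: "e \<in> fbasis N a"
    show "corr (subins xs {..<length xs} + {#al, be, e#}) * (1 / c) *
            corr (subins xs ({..<length xs} - {..<length xs}) + {#fdual N a e, ga, de#})
        = (if e = mmul ga de then ins_corr N a corr xs al be (mmul ga de) else 0)"
      using fermat_g0_system_three_point[OF sys fdual_in_fbasis[OF e] S(3,4)]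
        three_point_eq_top_iff_right[OF S(3,4) e] \<open>c \<noteq> 0\<close> S e
      by (auto simp: three_point_def subins_all ins_corr_def)
  qed
  also have "\<dots> = ins_corr N a corr xs al be (mmul ga de)"
    by (simp add: sum.delta[OF finite_fbasis] ins_corr_def)
  finally show ?thesis .
qed

text \<open>Since the three-point correlators encode the product, the terms I = {} and I = all of the
  WDVV sum collapse to single correlators in which two insertions are multiplied; every other term
  only involves correlators with fewer insertions.\<close>

lemma wdvv_side_split:
  assumes sys: "fermat_g0_system N a c corr" and c: "c \<noteq> 0" and "xs \<noteq> []"
    and S: "al \<in> fbasis N a" "be \<in> fbasis N a" "ga \<in> fbasis N a" "de \<in> fbasis N a"
  shows "wdvv_side N a c corr xs al be ga de =
     ins_corr N a corr xs (mmul al be) ga de + ins_corr N a corr xs al be (mmul ga de) +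
     sum (wdvv_term N a c corr xs al be ga de) (Pow {..<length xs} - {{}, {..<length xs}})"
proof -
  let ?F = "wdvv_term N a c corr xs al be ga de"
  let ?A = "Pow {..<length xs}"
  have "{} \<noteq> {..<length xs}" using \<open>xs \<noteq> []\<close> by auto
  have "wdvv_side N a c corr xs al be ga de = sum ?F ?A"
    by (simp add: wdvv_side_def wdvv_term_def)
  also have "\<dots> = ?F {} + sum ?F (?A - {{}})"
    by (rule sum.remove) auto
  also have "sum ?F (?A - {{}}) = ?F {..<length xs} + sum ?F (?A - {{}} - {{..<length xs}})"
    using \<open>{} \<noteq> {..<length xs}\<close> by (intro sum.remove) auto
  also have "?A - {{}} - {{..<length xs}} = ?A - {{}, {..<length xs}}" by auto
  finally show ?thesis
    using wdvv_term_empty[OF sys c S] wdvv_term_all[OF sys c S] by (simp add: add.assoc)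
qed

lemma wdvv_term_cong:
  assumes agree: "\<And>M. set_mset M \<subseteq> fbasis N a \<Longrightarrow> 3 \<le> size M \<Longrightarrow> size M < length xs + 3 \<Longrightarrow>
      corr1 M = corr2 M"
    and xs: "set xs \<subseteq> fbasis N a"
    and S: "al \<in> fbasis N a" "be \<in> fbasis N a" "ga \<in> fbasis N a" "de \<in> fbasis N a"
    and I: "I \<in> Pow {..<length xs} - {{}, {..<length xs}}"
  shows "wdvv_term N a c corr1 xs al be ga de I = wdvv_term N a c corr2 xs al be ga de I"
  unfolding wdvv_term_def
proof (rule sum.cong[OF refl])
  fix e assume e: "e \<in> fbasis N a"
  let ?J = "{..<length xs} - I"
  have "I \<subseteq> {..<length xs}" "I \<noteq> {}" "I \<noteq> {..<length xs}" using I by auto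
  then have "finite I" "0 < card I"
    by (auto intro: finite_subset simp: card_gt_0_iff)
  moreover have "card I < length xs"
    using \<open>I \<subseteq> {..<length xs}\<close> \<open>I \<noteq> {..<length xs}\<close>
    by (metis card_lessThan card_subset_eq finite_lessThan le_neq_implies_less card_mono)
  moreover have "card ?J = length xs - card I"
    using \<open>I \<subseteq> {..<length xs}\<close> \<open>finite I\<close> by (simp add: card_Diff_subset)
  moreover have "set_mset (subins xs I) \<subseteq> fbasis N a" "set_mset (subins xs ?J) \<subseteq> fbasis N a"
    using set_subins[OF \<open>I \<subseteq> {..<length xs}\<close>] set_subins[of ?J xs] xs by auto
  ultimately have "corr1 (subins xs I + {#al, be, e#}) = corr2 (subins xs I + {#al, be, e#})"
    and "corr1 (subins xs ?J + {#fdual N a e, ga, de#}) = corr2 (subins xs ?J + {#fdual N a e, ga, de#})"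
    using agree S e fdual_in_fbasis[OF e] size_subins[of I xs] size_subins[of ?J xs] by auto
  then show "corr1 (subins xs I + {#al, be, e#}) * (1 / c) * corr1 (subins xs ?J + {#fdual N a e, ga, de#}) =
             corr2 (subins xs I + {#al, be, e#}) * (1 / c) * corr2 (subins xs ?J + {#fdual N a e, ga, de#})"
    by simp
qed

definition ins_diff :: "nat \<Rightarrow> (nat \<Rightarrow> nat) \<Rightarrow> ((nat \<Rightarrow> nat) multiset \<Rightarrow> complex) \<Rightarrow>
    ((nat \<Rightarrow> nat) multiset \<Rightarrow> complex) \<Rightarrow> (nat \<Rightarrow> nat) list \<Rightarrow>
    (nat \<Rightarrow> nat) \<Rightarrow> (nat \<Rightarrow> nat) \<Rightarrow> (nat \<Rightarrow> nat) \<Rightarrow> complex" where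
  "ins_diff N a corr1 corr2 xs x y z = ins_corr N a corr1 xs x y z - ins_corr N a corr2 xs x y z"

lemma wdvv_ins_diff:
  assumes sys1: "fermat_g0_system N a c corr1" and sys2: "fermat_g0_system N a c corr2"
    and c: "c \<noteq> 0" and xs: "xs \<noteq> []" "set xs \<subseteq> fbasis N a"
    and S: "al \<in> fbasis N a" "be \<in> fbasis N a" "ga \<in> fbasis N a" "de \<in> fbasis N a"
    and agree: "\<And>M. set_mset M \<subseteq> fbasis N a \<Longrightarrow> 3 \<le> size M \<Longrightarrow> size M < length xs + 3 \<Longrightarrow>
      corr1 M = corr2 M"
  shows "ins_diff N a corr1 corr2 xs (mmul al be) ga de + ins_diff N a corr1 corr2 xs al be (mmul ga de) =
         ins_diff N a corr1 corr2 xs (mmul al ga) be de + ins_diff N a corr1 corr2 xs al ga (mmul be de)"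
proof -
  let ?P = "Pow {..<length xs} - {{}, {..<length xs}}"
  have R: "sum (wdvv_term N a c corr2 xs al be ga de) ?P = sum (wdvv_term N a c corr1 xs al be ga de) ?P"
    "sum (wdvv_term N a c corr2 xs al ga be de) ?P = sum (wdvv_term N a c corr1 xs al ga be de) ?P"
    by (rule sum.cong[OF refl], rule sym, rule wdvv_term_cong[OF agree xs(2) S]; simp)
      (rule sum.cong[OF refl], rule sym, rule wdvv_term_cong[OF agree xs(2) S(1,3,2,4)]; simp)
  have lin: "\<And>a1 b1 r c1 d1 r' a2 b2 c2 d2 :: complex. a1 + b1 + r = c1 + d1 + r' \<Longrightarrow>
      a2 + b2 + r = c2 + d2 + r' \<Longrightarrow> (a1 - a2) + (b1 - b2) = (c1 - c2) + (d1 - d2)"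
    by algebra
  show ?thesis
    unfolding ins_diff_def
    using fermat_g0_system_wdvv[OF sys1 xs(2) S] fermat_g0_system_wdvv[OF sys2 xs(2) S]
    unfolding wdvv_side_split[OF sys1 c xs(1) S] wdvv_side_split[OF sys1 c xs(1) S(1,3,2,4)]
      wdvv_side_split[OF sys2 c xs(1) S] wdvv_side_split[OF sys2 c xs(1) S(1,3,2,4)] R
    by (rule lin)
qed

section \<open>The correlators \<open>\<langle>x_j, x_j, u, v\<rangle>\<close>\<close>

text \<open>The pairs with u v = x_j^(a_j-2) \<cdot> top: these index the four-point correlators
  \<open>\<langle>x_j, x_j, u, v\<rangle>\<close> that survive the selection rules.\<close>

definition hessian_split :: "nat \<Rightarrow> (nat \<Rightarrow> nat) \<Rightarrow> nat \<Rightarrow> (nat \<Rightarrow> nat) \<Rightarrow> (nat \<Rightarrow> nat) \<Rightarrow> bool" where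
  "hessian_split N a j u v \<longleftrightarrow> u \<in> fbasis N a \<and> v \<in> fbasis N a \<and> u j = a j - 2 \<and> v j = a j - 2 \<and>
     (\<forall>i<N. i \<noteq> j \<longrightarrow> u i + v i = a i - 2)"

lemma hessian_split_base:
  assumes "hessian_split N a j u v" "\<forall>i<N. i \<noteq> j \<longrightarrow> u i = 0"
  shows "u = fxpow j (a j - 2)" "v = ftop N a"
  using assms by (auto simp: hessian_split_def fbasis_def fxpow_def ftop_def fun_eq_iff) (metis not_le)+

text \<open>WDVV with the extra insertion x_j, applied to (v, x_j, x_i, u'): the products v x_j and
  x_j u' vanish because their x_j-exponent exceeds a_j - 2.\<close>

lemma corr_diff_hessian_split_shift:
  assumes sys1: "fermat_g0_system N a c corr1" and sys2: "fermat_g0_system N a c corr2"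
    and c: "c \<noteq> 0" and a: "\<forall>i<N. a i > 2" and j: "j < N"
    and uv: "hessian_split N a j u v" and i: "i < N" "i \<noteq> j" "1 \<le> u i"
  defines "u' \<equiv> u(i := u i - 1)" and "v' \<equiv> mmul v (fxpow i 1)"
  shows "hessian_split N a j u' v'"
    and "corr1 {#fxpow j 1, fxpow j 1, u, v#} - corr2 {#fxpow j 1, fxpow j 1, u, v#} =
         corr1 {#fxpow j 1, fxpow j 1, u', v'#} - corr2 {#fxpow j 1, fxpow j 1, u', v'#}"
proof -
  let ?ej = "fxpow j 1" and ?ei = "fxpow i 1"
  have ejS: "?ej \<in> fbasis N a" and eiS: "?ei \<in> fbasis N a"
    using fxpow_in_fbasis[of j N 1 a] fxpow_in_fbasis[of i N 1 a] j i a by auto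
  show split': "hessian_split N a j u' v'"
    using uv i by (auto simp: hessian_split_def fbasis_def u'_def v'_def mmul_def fxpow_def)
  have u: "mmul ?ei u' = u" using i by (auto simp: mmul_def u'_def fxpow_def fun_eq_iff)
  have "mmul v ?ej \<notin> fbasis N a" "mmul ?ej u' \<notin> fbasis N a"
    using uv split' j a by (auto simp: hessian_split_def mmul_def fxpow_def fbasis_def)
  moreover have "u \<in> fbasis N a" "v \<in> fbasis N a" "u' \<in> fbasis N a" "v' \<in> fbasis N a"
    using uv split' by (auto simp: hessian_split_def)
  moreover have "ins_diff N a corr1 corr2 [?ej] (mmul v ?ej) ?ei u' + ins_diff N a corr1 corr2 [?ej] v ?ej u
      = ins_diff N a corr1 corr2 [?ej] v' ?ej u' + ins_diff N a corr1 corr2 [?ej] v ?ei (mmul ?ej u')"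
    using wdvv_ins_diff[OF sys1 sys2 c _ _ _ ejS eiS, of "[?ej]" v u'] corr_eq_size_3[OF sys1 sys2]
      ejS \<open>v \<in> fbasis N a\<close> \<open>u' \<in> fbasis N a\<close> u
    by (simp add: v'_def)
  ultimately show "corr1 {#?ej, ?ej, u, v#} - corr2 {#?ej, ?ej, u, v#} =
      corr1 {#?ej, ?ej, u', v'#} - corr2 {#?ej, ?ej, u', v'#}"
    using ejS by (simp add: ins_diff_def ins_corr_def add_mset_commute)
qed

lemma corr_diff_hessian_split:
  assumes sys1: "fermat_g0_system N a c corr1" and sys2: "fermat_g0_system N a c corr2"
    and c: "c \<noteq> 0" and a: "\<forall>i<N. a i > 2" and j: "j < N" and uv: "hessian_split N a j u v"
  shows "corr1 {#fxpow j 1, fxpow j 1, u, v#} - corr2 {#fxpow j 1, fxpow j 1, u, v#} =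
         corr1 {#fxpow j 1, fxpow j 1, fxpow j (a j - 2), ftop N a#} -
         corr2 {#fxpow j 1, fxpow j 1, fxpow j (a j - 2), ftop N a#}"
  using uv
proof (induction "tdeg N u" arbitrary: u v rule: less_induct)
  case less
  show ?case
  proof (cases "\<exists>i<N. i \<noteq> j \<and> 1 \<le> u i")
    case False
    then have "\<forall>i<N. i \<noteq> j \<longrightarrow> u i = 0" by auto
    then show ?thesis using hessian_split_base[OF less.prems] by simp
  next
    case True
    then obtain i where i: "i < N" "i \<noteq> j" "1 \<le> u i" by auto
    have "tdeg N (u(i := u i - 1)) < tdeg N u"
      unfolding tdeg_def by (rule sum_strict_mono_ex1) (use i in auto)
    then show ?thesis
      using corr_diff_hessian_split_shift[OF sys1 sys2 c a j less.prems i] less.hyps by simp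
  qed
qed

section \<open>Degree and selection rules\<close>

definition admissible :: "nat \<Rightarrow> (nat \<Rightarrow> nat) \<Rightarrow> (nat \<Rightarrow> nat) multiset \<Rightarrow> bool" where
  "admissible N a M \<longleftrightarrow> (\<Sum>r\<in>#M. fdeg N a r) = fchat N a + of_nat (size M) - 3 \<and>
     (\<forall>i<N. a i dvd (\<Sum>r\<in>#M. r i) + 2)"

lemma fermat_g0_system_admissible:
  "fermat_g0_system N a c corr \<Longrightarrow> set_mset M \<subseteq> fbasis N a \<Longrightarrow> 3 \<le> size M \<Longrightarrow>
   corr M \<noteq> 0 \<Longrightarrow> admissible N a M"
  unfolding fermat_g0_system_def admissible_def by blast

lemma sum_sum_mset_swap: "(\<Sum>i\<in>A. \<Sum>r\<in>#M. f r i) = (\<Sum>r\<in>#M. \<Sum>i\<in>A. f r i)"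
  by (induction M) (simp_all add: sum.distrib)

text \<open>The selection rule makes each quotient exact, so this is the dimension axiom in integers.\<close>

lemma admissible_quotient_sum:
  assumes a: "\<forall>i<N. 0 < a i" and adm: "admissible N a M"
  shows "(\<Sum>i<N. ((\<Sum>r\<in>#M. r i) + 2) div a i) + 3 = N + size M"
proof -
  let ?S = "\<lambda>i. \<Sum>r\<in>#M. r i"
  have "(\<Sum>r\<in>#M. fdeg N a r) = (\<Sum>i<N. \<Sum>r\<in>#M. of_nat (r i) / of_nat (a i))"
    unfolding fdeg_def by (rule sum_sum_mset_swap[symmetric])
  also have "\<dots> = (\<Sum>i<N. of_nat (?S i) / of_nat (a i))"
    by (intro sum.cong refl, induction M) (simp_all add: add_divide_distrib)
  finally have dim: "(\<Sum>i<N. of_nat (?S i) / of_nat (a i)) = fchat N a + of_nat (size M) - (3 :: rat)"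
    using adm by (simp add: admissible_def)
  have "(of_nat ((?S i + 2) div a i) :: rat) = (of_nat (?S i) + 2) / of_nat (a i)" if "i < N" for i
  proof -
    have "a i * ((?S i + 2) div a i) = ?S i + 2" using adm that by (simp add: admissible_def)
    then have "(of_nat (a i) :: rat) * of_nat ((?S i + 2) div a i) = of_nat (?S i) + 2"
      by (metis of_nat_add of_nat_mult of_nat_numeral)
    then show ?thesis using a that by (simp add: field_simps)
  qed
  then have "(of_nat (\<Sum>i<N. (?S i + 2) div a i) :: rat) = (\<Sum>i<N. (of_nat (?S i) + 2) / of_nat (a i))"
    by simp
  also have "\<dots> = (\<Sum>i<N. of_nat (?S i) / of_nat (a i)) + (\<Sum>i<N. 2 / of_nat (a i))"
    by (simp add: add_divide_distrib sum.distrib)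
  also have "\<dots> = of_nat N + of_nat (size M) - 3"
    unfolding dim fchat_def by (simp add: sum_subtractf)
  finally show ?thesis by linarith
qed

lemma sum_le_member_imp_zero:
  fixes f :: "'a \<Rightarrow> nat"
  assumes "finite A" "j \<in> A" "sum f A \<le> f j" "i \<in> A" "i \<noteq> j"
  shows "f i = 0"
proof -
  have "f i \<le> sum f (A - {j})" using assms by (intro member_le_sum) auto
  then show ?thesis using assms sum.remove[of A j f] by simp
qed

text \<open>In the counting lemmas, n_i is the number of insertions x_i, T_i is the exponent of
  x_i in the product of the remaining q insertions, and m_i is the quotient of
  \<open>admissible_quotient_sum\<close>.\<close>

lemma fermat_count_0:
  fixes a n T m :: "nat \<Rightarrow> nat"
  assumes "1 \<le> N" and a: "\<forall>i<N. 3 \<le> a i" and am: "\<forall>i<N. a i * m i = n i + T i + 2"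
    and T: "\<forall>i<N. T i = 0" and sm: "(\<Sum>i<N. m i) + 3 = N + (\<Sum>i<N. n i)"
    and k: "4 \<le> (\<Sum>i<N. n i)"
  shows "N = 1 \<and> n 0 = 4 \<and> a 0 = 3"
proof -
  have "(\<Sum>i<N. 3 * m i) \<le> (\<Sum>i<N. n i + 2)"
  proof (rule sum_mono)
    fix i assume "i \<in> {..<N}"
    then have "a i * m i = n i + 2" "3 \<le> a i" using am T a by auto
    moreover have "3 * m i \<le> a i * m i" using calculation(2) by (rule mult_right_mono) simp
    ultimately show "3 * m i \<le> n i + 2" by simp
  qed
  also have "(\<Sum>i<N. n i + 2) = (\<Sum>i<N. n i) + 2 * N" unfolding sum.distrib by simp
  finally have "3 * (\<Sum>i<N. m i) \<le> (\<Sum>i<N. n i) + 2 * N"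
    by (simp add: sum_distrib_left)
  then have "N = 1" "(\<Sum>i<N. n i) = 4" using sm k \<open>1 \<le> N\<close> by linarith+
  moreover from calculation have "n 0 = 4" by simp
  moreover from calculation have "m 0 = 2" using sm by simp
  ultimately show ?thesis using am T by auto
qed

lemma fermat_count_1:
  fixes a n T m :: "nat \<Rightarrow> nat"
  assumes a: "\<forall>i<N. 3 \<le> a i" and am: "\<forall>i<N. a i * m i = n i + T i + 2"
    and T: "\<forall>i<N. T i \<le> a i - 2" and sm: "(\<Sum>i<N. m i) + 3 = N + (\<Sum>i<N. n i) + 1"
    and k: "3 \<le> (\<Sum>i<N. n i)"
  shows "\<exists>j<N. n j = 3 \<and> a j = 3 \<and> T j = 1 \<and> (\<forall>i<N. i \<noteq> j \<longrightarrow> n i = 0 \<and> T i = a i - 2)"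
proof -
  have m1: "1 \<le> m i" if "i < N" for i using am that by (cases "m i") auto
  have an: "3 * (m i - 1) \<le> a i * (m i - 1)" "a i * (m i - 1) \<le> n i" if "i < N" for i
  proof -
    have "a i * m i = n i + T i + 2" "T i \<le> a i - 2" "3 \<le> a i" using am T a that by auto
    moreover have "a i * (m i - 1) = a i * m i - a i" by (simp add: diff_mult_distrib2)
    ultimately show "a i * (m i - 1) \<le> n i" by arith
    show "3 * (m i - 1) \<le> a i * (m i - 1)" using \<open>3 \<le> a i\<close> by (rule mult_right_mono) simp
  qed
  have "(\<Sum>i<N. m i) = (\<Sum>i<N. (m i - 1) + 1)" using m1 by (intro sum.cong) force+
  then have "(\<Sum>i<N. m i - 1) + N = (\<Sum>i<N. m i)" unfolding sum.distrib by simp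
  moreover have "3 * (\<Sum>i<N. m i - 1) \<le> (\<Sum>i<N. n i)"
    unfolding sum_distrib_left using an by (intro sum_mono) (meson le_trans lessThan_iff)
  ultimately have sn: "(\<Sum>i<N. n i) = 3" and sm1: "(\<Sum>i<N. m i - 1) = 1" using sm k by linarith+
  have "\<exists>j<N. m j - 1 \<noteq> 0"
  proof (rule ccontr)
    assume "\<not> (\<exists>j<N. m j - 1 \<noteq> 0)"
    then have "(\<Sum>i<N. m i - 1) = 0" by simp
    with sm1 show False by simp
  qed
  then obtain j where j: "j < N" "m j - 1 \<noteq> 0" by blast
  have "n j \<le> 3" using sn j member_le_sum[of j "{..<N}" n] by simp
  then have "m j = 2" using an[OF j(1)] j(2) by linarith
  moreover have "a j \<le> n j" using an(2)[OF j(1)] \<open>m j = 2\<close> by simp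
  then have "a j = 3" "n j = 3" using a j(1) \<open>n j \<le> 3\<close> by auto
  moreover have "n i = 0 \<and> T i = a i - 2" if "i < N" "i \<noteq> j" for i
  proof -
    have "n i = 0" using sum_le_member_imp_zero[of "{..<N}" j n i] sn \<open>n j = 3\<close> j that by simp
    then have "m i = 1" using an[OF that(1)] m1[OF that(1)] by linarith
    then show ?thesis using am \<open>n i = 0\<close> that by auto
  qed
  ultimately show ?thesis using am j by force
qed

lemma two_heavy_index_bounds:
  fixes a n m :: nat
  assumes a: "3 \<le> a" and key: "a * m + 2 \<le> n + 2 * a"
  shows "m \<le> n + 1" and "1 \<le> n \<Longrightarrow> m \<le> n" and "m = n \<Longrightarrow> n \<le> 2"
proof -
  show "m \<le> n + 1"
  proof (rule ccontr)
    assume "\<not> m \<le> n + 1"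
    then have "a * (n + 2) \<le> a * m" by (intro mult_le_mono2) simp
    moreover have "n \<le> a * n" using a by simp
    ultimately show False using key by (simp add: algebra_simps)
  qed
  show "m \<le> n" if "1 \<le> n"
  proof (rule ccontr)
    assume "\<not> m \<le> n"
    then have "a * (n + 1) \<le> a * m" by (intro mult_le_mono2) simp
    moreover have "n - 1 \<le> a * (n - 1)" using a by simp
    moreover have "a * (n + 1) = a * (n - 1) + 2 * a"
      using that by (cases n) (simp_all add: algebra_simps)
    ultimately show False using key that by linarith
  qed
  show "n \<le> 2" if "m = n"
  proof (rule ccontr)
    assume "\<not> n \<le> 2"
    have "3 * (n - 2) \<le> a * (n - 2)" using a by (intro mult_right_mono) auto
    moreover have "a * n = a * (n - 2) + 2 * a" using \<open>\<not> n \<le> 2\<close> by (simp add: diff_mult_distrib2)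
    ultimately show False using key \<open>\<not> n \<le> 2\<close> unfolding \<open>m = n\<close> by arith
  qed
qed

text \<open>The generator counts n_i + 1 dominate the quotients m_i, with a deficit of one at every
  index carrying a generator; since the totals differ by one, a single index j carries all of them.\<close>

lemma fermat_count_2:
  fixes a n T m :: "nat \<Rightarrow> nat"
  assumes a: "\<forall>i<N. 3 \<le> a i" and am: "\<forall>i<N. a i * m i = n i + T i + 2"
    and T: "\<forall>i<N. T i \<le> 2 * (a i - 2)" and sm: "(\<Sum>i<N. m i) + 3 = N + (\<Sum>i<N. n i) + 2"
    and k: "2 \<le> (\<Sum>i<N. n i)"
  shows "\<exists>j<N. n j = 2 \<and> T j = 2 * (a j - 2) \<and> (\<forall>i<N. i \<noteq> j \<longrightarrow> n i = 0 \<and> T i = a i - 2)"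
proof -
  have bounds: "m i \<le> n i + 1" "1 \<le> n i \<Longrightarrow> m i \<le> n i" "m i = n i \<Longrightarrow> n i \<le> 2"
    if "i < N" for i
  proof -
    have "a i * m i = n i + T i + 2" "T i \<le> 2 * (a i - 2)" "3 \<le> a i" using am T a that by auto
    moreover from calculation have "a i * m i + 2 \<le> n i + 2 * a i" by arith
    ultimately show "m i \<le> n i + 1" "1 \<le> n i \<Longrightarrow> m i \<le> n i" "m i = n i \<Longrightarrow> n i \<le> 2"
      using two_heavy_index_bounds[of "a i" "m i" "n i"] by simp_all
  qed
  have "\<exists>j<N. 1 \<le> n j"
  proof (rule ccontr)
    assume "\<not> (\<exists>j<N. 1 \<le> n j)"
    then have "(\<Sum>i<N. n i) = 0" by (simp add: not_less_eq_eq)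
    with k show False by simp
  qed
  then obtain j where j: "j < N" "1 \<le> n j" by blast
  define h where "h i = m i + (if i = j then 1 else 0)" for i
  have "(\<Sum>i<N. h i) = (\<Sum>i<N. m i) + 1" using j by (simp add: h_def sum.distrib)
  also have "\<dots> = (\<Sum>i<N. n i + 1)" using sm unfolding sum.distrib by simp
  finally have "(\<Sum>i<N. h i) = (\<Sum>i<N. n i + 1)" .
  moreover have "h i \<le> n i + 1" if "i < N" for i
    using bounds(1,2) j that by (auto simp: h_def)
  ultimately have h: "h i = n i + 1" if "i < N" for i
    using sum_mono_inv[of h "{..<N}" "\<lambda>i. n i + 1" i] that by simp
  have others: "n i = 0 \<and> T i = a i - 2" if "i < N" "i \<noteq> j" for i
  proof -
    have "m i = n i + 1" using h[OF that(1)] that(2) by (simp add: h_def)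
    then have "n i = 0" using bounds(2)[OF that(1)] by (cases "n i") auto
    then show ?thesis using am \<open>m i = n i + 1\<close> that(1) by auto
  qed
  have "(\<Sum>i<N. n i) = n j + (\<Sum>i\<in>{..<N} - {j}. n i)" using j by (simp add: sum.remove)
  also have "(\<Sum>i\<in>{..<N} - {j}. n i) = 0" using others by simp
  finally have "2 \<le> n j" using k by simp
  moreover have "m j = n j" using h[OF j(1)] by (simp add: h_def)
  ultimately have "n j = 2" using bounds(3)[OF j(1)] by simp
  moreover have "T j = 2 * (a j - 2)" using am j \<open>m j = n j\<close> \<open>n j = 2\<close> by auto
  ultimately show ?thesis using j others by blast
qed

lemma fermat_count:
  fixes a n T m :: "nat \<Rightarrow> nat"
  assumes "1 \<le> N" and a: "\<forall>i<N. 3 \<le> a i" and am: "\<forall>i<N. a i * m i = n i + T i + 2"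
    and T: "\<forall>i<N. T i \<le> q * (a i - 2)" and "q \<le> 2"
    and sm: "(\<Sum>i<N. m i) + 3 = N + (\<Sum>i<N. n i) + q" and k: "4 \<le> (\<Sum>i<N. n i) + q"
  shows "\<exists>j<N. n j + q = 4 \<and> T j = q * (a j - 2) \<and> (q < 2 \<longrightarrow> a j = 3) \<and>
           (\<forall>i<N. i \<noteq> j \<longrightarrow> n i = 0 \<and> T i = a i - 2)"
proof -
  consider "q = 0" | "q = 1" | "q = 2" using \<open>q \<le> 2\<close> by linarith
  then show ?thesis
  proof cases
    case 1
    then show ?thesis using fermat_count_0[OF \<open>1 \<le> N\<close> a am] T sm k by (intro exI[of _ 0]) auto
  next
    case 2
    then show ?thesis using fermat_count_1[OF a am] T sm k by fastforce
  next
    case 3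
    then show ?thesis using fermat_count_2[OF a am] T sm k by fastforce
  qed
qed

lemma fbasis_tdeg_1:
  assumes "r \<in> fbasis N a" "tdeg N r = 1" "j < N" "\<forall>i<N. i \<noteq> j \<longrightarrow> r i = 0"
  shows "r = fxpow j 1"
proof -
  have "tdeg N r = r j + (\<Sum>i\<in>{..<N} - {j}. r i)" using assms(3) by (simp add: tdeg_def sum.remove)
  then have "r j = 1" using assms(2,4) by simp
  then show ?thesis using assms(1,4) by (auto simp: fxpow_def fbasis_def fun_eq_iff) (metis not_le)
qed

lemma member_le_sum_mset:
  fixes f :: "'a \<Rightarrow> 'b :: canonically_ordered_monoid_add"
  shows "x \<in># M \<Longrightarrow> f x \<le> (\<Sum>y\<in>#M. f y)"
  by (auto dest!: multi_member_split simp: le_iff_add)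

lemma size_eq_2_mset:
  assumes "size M = 2"
  shows "\<exists>x y. M = {#x, y#}"
proof -
  obtain x M' where "M = add_mset x M'" using size_eq_Suc_imp_eq_union[of M 1] assms by auto
  moreover obtain y where "M' = {#y#}" using size_1_singleton_mset[of M'] assms calculation by auto
  ultimately show ?thesis by blast
qed

lemma hessian_split_completion:
  assumes a: "\<forall>i<N. 2 < a i" and j: "j < N" and U: "set_mset U \<subseteq> fbasis N a" "size U \<le> 2"
    and aj: "size U < 2 \<longrightarrow> a j = 3" and Tj: "(\<Sum>r\<in>#U. r j) = size U * (a j - 2)"
    and Ti: "\<forall>i<N. i \<noteq> j \<longrightarrow> (\<Sum>r\<in>#U. r i) = a i - 2"
  shows "\<exists>u v. hessian_split N a j u v \<and> replicate_mset (2 - size U) (fxpow j 1) + U = {#u, v#}"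
proof -
  have "size (replicate_mset (2 - size U) (fxpow j 1) + U) = 2" using U(2) by simp
  then obtain u v where uv: "replicate_mset (2 - size U) (fxpow j 1) + U = {#u, v#}"
    using size_eq_2_mset by blast
  have "fxpow j 1 \<in> fbasis N a" using fxpow_in_fbasis[of j N 1 a] j a by auto
  then have "set_mset {#u, v#} \<subseteq> fbasis N a" using U(1) unfolding uv[symmetric] by auto
  then have S: "u \<in> fbasis N a" "v \<in> fbasis N a" by auto
  have sum_uv: "u i + v i = (\<Sum>r\<in>#U. r i) + (2 - size U) * fxpow j 1 i" for i
    using arg_cong[OF uv, of "\<lambda>M. \<Sum>r\<in>#M. r i"] by simp
  have "u j + v j = 2 * (a j - 2)"
    using sum_uv[of j] Tj aj U(2) by (cases "size U = 2") (auto simp: fxpow_def)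
  moreover have "u j \<le> a j - 2" "v j \<le> a j - 2" using S j by (auto simp: fbasis_def)
  ultimately have "u j = a j - 2" "v j = a j - 2" by linarith+
  then have "hessian_split N a j u v"
    using S sum_uv Ti by (auto simp: hessian_split_def fxpow_def)
  then show ?thesis using uv by blast
qed

lemma generators_eq_replicate:
  assumes "set_mset G \<subseteq> fbasis N a" "\<forall>r\<in>#G. tdeg N r = 1" "j < N"
    and "\<forall>i<N. i \<noteq> j \<longrightarrow> (\<Sum>r\<in>#G. r i) = 0"
  shows "G = replicate_mset (size G) (fxpow j 1)"
proof (rule set_mset_subset_singletonD, rule subsetI)
  fix r assume r: "r \<in># G"
  have "r i = 0" if "i < N" "i \<noteq> j" for i
    using member_le_sum_mset[OF r, of "\<lambda>r. r i"] assms(4) that by simp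
  then show "r \<in> {fxpow j 1}" using fbasis_tdeg_1[of r N a j] assms(1-3) r by auto
qed

text \<open>An insertion is heavy if its total degree is at least 2; in a unit-free multiset the others
  are generators x_i. With at most two heavy insertions the selection rules leave only the
  correlators \<open>\<langle>x_j, x_j, u, v\<rangle>\<close> of \<open>hessian_split\<close>, where a missing heavy insertion is an
  extra x_j with a_j = 3.\<close>

lemma admissible_light_count:
  fixes N :: nat and M :: "(nat \<Rightarrow> nat) multiset"
  defines "G \<equiv> filter_mset (\<lambda>r. tdeg N r < 2) M" and "U \<equiv> filter_mset (\<lambda>r. 2 \<le> tdeg N r) M"
  assumes N: "1 \<le> N" and a: "\<forall>i<N. 2 < a i" and M: "set_mset M \<subseteq> fbasis N a"
    and k: "4 \<le> size M" and unit: "funit \<notin># M" and light: "size U \<le> 2" and adm: "admissible N a M"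
  shows "\<exists>j<N. G = replicate_mset (2 + (2 - size U)) (fxpow j 1) \<and>
    (\<Sum>r\<in>#U. r j) = size U * (a j - 2) \<and> (size U < 2 \<longrightarrow> a j = 3) \<and>
    (\<forall>i<N. i \<noteq> j \<longrightarrow> (\<Sum>r\<in>#U. r i) = a i - 2)"
proof -
  define n where "n i = (\<Sum>r\<in>#G. r i)" for i
  define T where "T i = (\<Sum>r\<in>#U. r i)" for i
  define m where "m i = ((\<Sum>r\<in>#M. r i) + 2) div a i" for i
  have MGU: "M = G + U" unfolding G_def U_def using multiset_partition[of M "\<lambda>r. tdeg N r < 2"]
    by (simp add: not_less)
  have GS: "set_mset G \<subseteq> fbasis N a" and US: "set_mset U \<subseteq> fbasis N a"
    using M by (auto simp: G_def U_def)
  have gen: "\<forall>r\<in>#G. tdeg N r = 1"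
    using M unit tdeg_eq_0_imp_funit[of _ N a] by (auto simp: G_def less_2_cases_iff)
  have "(\<Sum>i<N. n i) = (\<Sum>r\<in>#G. tdeg N r)" unfolding n_def tdeg_def by (rule sum_sum_mset_swap)
  also have "\<dots> = (\<Sum>r\<in>#G. 1)" using gen by (intro arg_cong[where f = sum_mset] image_mset_cong) simp
  finally have sn: "(\<Sum>i<N. n i) = size G" by simp
  have "T i \<le> (\<Sum>r\<in>#U. a i - 2)" if "i < N" for i
    unfolding T_def using US that by (intro sum_mset_mono) (auto simp: fbasis_def)
  then have T: "\<forall>i<N. T i \<le> size U * (a i - 2)" by simp
  have am: "\<forall>i<N. a i * m i = n i + T i + 2"
  proof (intro allI impI)
    fix i assume "i < N"
    then have "a i dvd (\<Sum>r\<in>#M. r i) + 2" using adm by (simp add: admissible_def)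
    moreover have "(\<Sum>r\<in>#M. r i) = n i + T i" unfolding n_def T_def MGU by simp
    ultimately show "a i * m i = n i + T i + 2" unfolding m_def by simp
  qed
  have "\<forall>i<N. 0 < a i" using a by auto
  then have "(\<Sum>i<N. m i) + 3 = N + size M" unfolding m_def by (rule admissible_quotient_sum[OF _ adm])
  then have sm: "(\<Sum>i<N. m i) + 3 = N + (\<Sum>i<N. n i) + size U" unfolding sn MGU by simp
  have "4 \<le> (\<Sum>i<N. n i) + size U" using k unfolding sn MGU by simp
  moreover have "\<forall>i<N. 3 \<le> a i" using a by auto
  ultimately obtain j where j: "j < N" and nj: "n j + size U = 4" and Tj: "T j = size U * (a j - 2)"
    and aj: "size U < 2 \<longrightarrow> a j = 3" and others: "\<forall>i<N. i \<noteq> j \<longrightarrow> n i = 0 \<and> T i = a i - 2"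
    using fermat_count[OF N _ am T light sm] by blast
  have "(\<Sum>i<N. n i) = n j + (\<Sum>i\<in>{..<N} - {j}. n i)" using j by (simp add: sum.remove)
  also have "(\<Sum>i\<in>{..<N} - {j}. n i) = 0" using others by simp
  finally have "size G = 2 + (2 - size U)" using sn nj light by simp
  moreover have "G = replicate_mset (size G) (fxpow j 1)"
    using generators_eq_replicate[OF GS gen j] others unfolding n_def by blast
  ultimately show ?thesis using j Tj aj others unfolding T_def by auto
qed

lemma admissible_light_shape:
  assumes N: "1 \<le> N" and a: "\<forall>i<N. 2 < a i" and M: "set_mset M \<subseteq> fbasis N a"
    and k: "4 \<le> size M" and unit: "funit \<notin># M"
    and light: "size (filter_mset (\<lambda>r. 2 \<le> tdeg N r) M) \<le> 2" and adm: "admissible N a M"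
  shows "\<exists>j<N. \<exists>u v. hessian_split N a j u v \<and> M = {#fxpow j 1, fxpow j 1, u, v#}"
proof -
  let ?U = "filter_mset (\<lambda>r. 2 \<le> tdeg N r) M"
  obtain j where j: "j < N"
    and G: "filter_mset (\<lambda>r. tdeg N r < 2) M = replicate_mset (2 + (2 - size ?U)) (fxpow j 1)"
    and Tj: "(\<Sum>r\<in>#?U. r j) = size ?U * (a j - 2)" and aj: "size ?U < 2 \<longrightarrow> a j = 3"
    and Ti: "\<forall>i<N. i \<noteq> j \<longrightarrow> (\<Sum>r\<in>#?U. r i) = a i - 2"
    using admissible_light_count[OF assms] by blast
  have "M = {#fxpow j 1, fxpow j 1#} + (replicate_mset (2 - size ?U) (fxpow j 1) + ?U)"
    using multiset_partition[of M "\<lambda>r. tdeg N r < 2"] G by (simp add: not_less numeral_2_eq_2)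
  moreover have "set_mset ?U \<subseteq> fbasis N a" using M by auto
  then obtain u v where "hessian_split N a j u v" "replicate_mset (2 - size ?U) (fxpow j 1) + ?U = {#u, v#}"
    using hessian_split_completion[OF a j _ light aj Tj Ti] by blast
  ultimately show ?thesis using j by (intro exI[of _ j]) auto
qed

section \<open>Induction on the sum of squared degrees\<close>

definition sq_sum :: "nat \<Rightarrow> (nat \<Rightarrow> nat) multiset \<Rightarrow> nat" where
  "sq_sum N M = (\<Sum>r\<in>#M. (tdeg N r)\<^sup>2)"

lemma sq_sum_le: "set_mset M \<subseteq> fbasis N a \<Longrightarrow> sq_sum N M \<le> size M * (\<Sum>i<N. a i)\<^sup>2"
proof -
  assume "set_mset M \<subseteq> fbasis N a"
  then have "sq_sum N M \<le> (\<Sum>r\<in>#M. (\<Sum>i<N. a i)\<^sup>2)"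
    unfolding sq_sum_def using tdeg_le_sum by (intro sum_mset_mono power_mono) auto
  then show ?thesis by simp
qed

lemma sq_sum_add_three: "sq_sum N (R + {#x, y, z#}) =
    sq_sum N R + (tdeg N x)\<^sup>2 + (tdeg N y)\<^sup>2 + (tdeg N z)\<^sup>2"
  by (simp add: sq_sum_def)

lemma obtain_three_least:
  fixes f :: "'a \<Rightarrow> nat"
  assumes "3 \<le> size (filter_mset P M)"
  obtains al be ps R where "M = R + {#al, be, ps#}" "P al" "P be" "P ps" "f ps \<le> f al" "f ps \<le> f be"
proof -
  obtain x where "x \<in># filter_mset P M" using assms by (metis multiset_nonemptyE not_numeral_le_zero size_empty)
  then obtain ps where ps: "ps \<in># filter_mset P M" and least: "\<And>y. y \<in># filter_mset P M \<Longrightarrow> f ps \<le> f y"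
    using ex_has_least_nat[of "\<lambda>y. y \<in># filter_mset P M" x f] by blast
  then obtain M1 where M1: "M = add_mset ps M1" by (auto dest: multi_member_split)
  then have "2 \<le> size (filter_mset P M1)" using assms ps by (auto split: if_splits)
  then obtain al where al: "al \<in># filter_mset P M1" by (metis multiset_nonemptyE not_numeral_le_zero size_empty)
  then obtain M2 where M2: "M1 = add_mset al M2" by (auto dest: multi_member_split)
  then have "1 \<le> size (filter_mset P M2)" using \<open>2 \<le> size (filter_mset P M1)\<close> al by (auto split: if_splits)
  then obtain be where be: "be \<in># filter_mset P M2" by (metis multiset_nonemptyE not_one_le_zero size_empty)
  then obtain R where "M2 = add_mset be R" by (auto dest: multi_member_split)
  then have "M = R + {#al, be, ps#}" using M1 M2 by (simp add: add_mset_commute)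
  moreover have "f ps \<le> f al" "f ps \<le> f be" using least al be M1 M2 by auto
  moreover have "P ps" "P al" "P be" using ps al be by auto
  ultimately show ?thesis using that by blast
qed

text \<open>Splitting off one generator from the lightest of three heavy insertions: each of the
  three other terms of the resulting WDVV relation has a larger sum of squared degrees.\<close>

lemma split_least_square_sums:
  fixes A B F :: nat
  assumes "1 \<le> F" "F < A" "F < B"
  shows "A\<^sup>2 + B\<^sup>2 + (F + 1)\<^sup>2 < (A + B)\<^sup>2 + 1\<^sup>2 + F\<^sup>2"
    and "A\<^sup>2 + B\<^sup>2 + (F + 1)\<^sup>2 < (A + 1)\<^sup>2 + B\<^sup>2 + F\<^sup>2"
    and "A\<^sup>2 + B\<^sup>2 + (F + 1)\<^sup>2 < A\<^sup>2 + 1\<^sup>2 + (B + F)\<^sup>2"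
proof -
  have "1 * (F + 1) \<le> A * B" using assms by (intro mult_mono) auto
  then show "A\<^sup>2 + B\<^sup>2 + (F + 1)\<^sup>2 < (A + B)\<^sup>2 + 1\<^sup>2 + F\<^sup>2"
    by (simp add: power2_eq_square algebra_simps)
  show "A\<^sup>2 + B\<^sup>2 + (F + 1)\<^sup>2 < (A + 1)\<^sup>2 + B\<^sup>2 + F\<^sup>2"
    using assms by (simp add: power2_eq_square algebra_simps)
  have "1 * F < B * F" using assms by (intro mult_strict_right_mono) auto
  moreover have "(B + F)\<^sup>2 = B\<^sup>2 + F\<^sup>2 + 2 * (B * F)" "(F + 1)\<^sup>2 = F\<^sup>2 + 2 * F + 1"
    by (simp_all add: power2_eq_square algebra_simps)
  ultimately show "A\<^sup>2 + B\<^sup>2 + (F + 1)\<^sup>2 < A\<^sup>2 + 1\<^sup>2 + (B + F)\<^sup>2" by linarith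
qed

lemma fbasis_split_generator:
  assumes "r \<in> fbasis N a" "1 \<le> tdeg N r"
  obtains i r' where "i < N" "r' \<in> fbasis N a" "mmul (fxpow i 1) r' = r" "tdeg N r = tdeg N r' + 1"
proof -
  have "\<exists>i<N. 1 \<le> r i"
  proof (rule ccontr)
    assume "\<not> (\<exists>i<N. 1 \<le> r i)"
    then have "tdeg N r = 0" unfolding tdeg_def by (simp add: not_less_eq_eq)
    with assms(2) show False by simp
  qed
  then obtain i where i: "i < N" "1 \<le> r i" by blast
  define r' where "r' = r(i := r i - 1)"
  have "r' \<in> fbasis N a" using assms(1) by (auto simp: r'_def fbasis_def)
  moreover have r: "mmul (fxpow i 1) r' = r" using i by (auto simp: mmul_def r'_def fxpow_def fun_eq_iff)
  moreover have "tdeg N r = tdeg N r' + 1" unfolding r[symmetric] tdeg_mmul tdeg_fxpow_1[OF i(1)] by simp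
  ultimately show ?thesis using that i(1) by blast
qed

lemma corr_eq_of_three_heavy:
  assumes sys1: "fermat_g0_system N a c corr1" and sys2: "fermat_g0_system N a c corr2"
    and c: "c \<noteq> 0" and a: "\<forall>i<N. 2 < a i"
    and M: "set_mset M \<subseteq> fbasis N a" "4 \<le> size M"
    and heavy: "3 \<le> size (filter_mset (\<lambda>r. 2 \<le> tdeg N r) M)"
    and smaller: "\<And>M'. set_mset M' \<subseteq> fbasis N a \<Longrightarrow> 3 \<le> size M' \<Longrightarrow> size M' < size M \<Longrightarrow>
      corr1 M' = corr2 M'"
    and larger: "\<And>M'. set_mset M' \<subseteq> fbasis N a \<Longrightarrow> size M' = size M \<Longrightarrow> sq_sum N M < sq_sum N M' \<Longrightarrow>
      corr1 M' = corr2 M'"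
  shows "corr1 M = corr2 M"
proof -
  obtain al be ps R where MR: "M = R + {#al, be, ps#}" and "2 \<le> tdeg N ps"
    and least: "tdeg N ps \<le> tdeg N al" "tdeg N ps \<le> tdeg N be"
    by (rule obtain_three_least[OF heavy, of "tdeg N"]) blast
  obtain xs where xs: "mset xs = R" using ex_mset by blast
  have S: "set xs \<subseteq> fbasis N a" "al \<in> fbasis N a" "be \<in> fbasis N a" "ps \<in> fbasis N a"
    using M(1) unfolding MR xs[symmetric] by auto
  have size: "size M = length xs + 3" unfolding MR xs[symmetric] by simp
  obtain i ph where i: "i < N" and ph: "ph \<in> fbasis N a" and ps: "mmul (fxpow i 1) ph = ps"
    and tdeg_ps: "tdeg N ps = tdeg N ph + 1"
    using fbasis_split_generator[OF S(4)] \<open>2 \<le> tdeg N ps\<close> by (metis one_le_numeral order_trans)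
  have ei: "fxpow i 1 \<in> fbasis N a" using fxpow_in_fbasis[of i N 1 a] i a by auto
  have tdeg_ei: "tdeg N (fxpow i (Suc 0)) = 1" using tdeg_fxpow_1[OF i] by simp
  have vanish: "ins_diff N a corr1 corr2 xs x y z = 0"
    if "sq_sum N M < sq_sum N (mset xs + {#x, y, z#})" for x y z
    using larger[of "mset xs + {#x, y, z#}"] that S(1) size by (auto simp: ins_diff_def ins_corr_def)
  let ?A = "tdeg N al" and ?B = "tdeg N be" and ?F = "tdeg N ph" and ?ei = "fxpow i 1"
  have sum_M: "sq_sum N M = sq_sum N R + ?A\<^sup>2 + ?B\<^sup>2 + (?F + 1)\<^sup>2"
    unfolding MR sq_sum_add_three tdeg_ps ..
  have "1 \<le> ?F" "?F < ?A" "?F < ?B" using \<open>2 \<le> tdeg N ps\<close> least unfolding tdeg_ps by auto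
  note increase = split_least_square_sums[OF this]
  have "ins_diff N a corr1 corr2 xs (mmul al be) ?ei ph = 0"
    using increase(1) sum_M by (intro vanish, unfold sq_sum_add_three) (simp add: tdeg_mmul tdeg_ei xs)
  moreover have "ins_diff N a corr1 corr2 xs (mmul al ?ei) be ph = 0"
    using increase(2) sum_M by (intro vanish, unfold sq_sum_add_three) (simp add: tdeg_mmul tdeg_ei xs)
  moreover have "ins_diff N a corr1 corr2 xs al ?ei (mmul be ph) = 0"
    using increase(3) sum_M by (intro vanish, unfold sq_sum_add_three) (simp add: tdeg_mmul tdeg_ei xs)
  moreover have "xs \<noteq> []" using M(2) size by auto
  ultimately have "ins_diff N a corr1 corr2 xs al be ps = 0"
    using wdvv_ins_diff[OF sys1 sys2 c _ S(1,2,3) ei ph smaller] size ps by simp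
  then show ?thesis using S unfolding MR xs[symmetric] by (simp add: ins_diff_def ins_corr_def)
qed

lemma corr_eq_induction_step:
  assumes N: "1 \<le> N" and a: "\<forall>i<N. 2 < a i" and c: "c \<noteq> 0"
    and sys1: "fermat_g0_system N a c corr1" and sys2: "fermat_g0_system N a c corr2"
    and base: "\<forall>j<N. corr1 {#fxpow j 1, fxpow j 1, fxpow j (a j - 2), ftop N a#}
               = corr2 {#fxpow j 1, fxpow j 1, fxpow j (a j - 2), ftop N a#}"
    and M: "set_mset M \<subseteq> fbasis N a" "4 \<le> size M"
    and smaller: "\<And>M'. set_mset M' \<subseteq> fbasis N a \<Longrightarrow> 3 \<le> size M' \<Longrightarrow> size M' < size M \<Longrightarrow>
      corr1 M' = corr2 M'"
    and larger: "\<And>M'. set_mset M' \<subseteq> fbasis N a \<Longrightarrow> size M' = size M \<Longrightarrow> sq_sum N M < sq_sum N M' \<Longrightarrow>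
      corr1 M' = corr2 M'"
  shows "corr1 M = corr2 M"
proof -
  consider "funit \<in># M" | "\<not> admissible N a M"
    | "size (filter_mset (\<lambda>r. 2 \<le> tdeg N r) M) \<le> 2" "funit \<notin># M" "admissible N a M"
    | "3 \<le> size (filter_mset (\<lambda>r. 2 \<le> tdeg N r) M)"
    by (cases "3 \<le> size (filter_mset (\<lambda>r. 2 \<le> tdeg N r) M)") auto
  then show ?thesis
  proof cases
    case 1
    then show ?thesis using fermat_g0_system_unit[OF sys1] fermat_g0_system_unit[OF sys2] M by simp
  next
    case 2
    have "3 \<le> size M" using M by simp
    then have "corr1 M = 0" "corr2 M = 0" using 2 fermat_g0_system_admissible[OF sys1 M(1)]
        fermat_g0_system_admissible[OF sys2 M(1)] by blast+
    then show ?thesis by simp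
  next
    case 3
    then obtain j u v where "j < N" "hessian_split N a j u v" "M = {#fxpow j 1, fxpow j 1, u, v#}"
      using admissible_light_shape[OF N a M(1)] M by auto
    then show ?thesis using corr_diff_hessian_split[OF sys1 sys2 c a \<open>j < N\<close>] base by simp
  next
    case 4
    then show ?thesis using corr_eq_of_three_heavy[OF sys1 sys2 c a M] smaller larger by simp
  qed
qed

text \<open>Within a fixed number of insertions, the induction runs downwards along the sum of squared
  degrees, which is bounded on the finite basis.\<close>

lemma corr_eq_of_agree_smaller:
  assumes N: "1 \<le> N" and a: "\<forall>i<N. 2 < a i" and c: "c \<noteq> 0"
    and sys1: "fermat_g0_system N a c corr1" and sys2: "fermat_g0_system N a c corr2"
    and base: "\<forall>j<N. corr1 {#fxpow j 1, fxpow j 1, fxpow j (a j - 2), ftop N a#}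
               = corr2 {#fxpow j 1, fxpow j 1, fxpow j (a j - 2), ftop N a#}"
    and M: "set_mset M \<subseteq> fbasis N a" "4 \<le> size M"
    and smaller: "\<And>M'. set_mset M' \<subseteq> fbasis N a \<Longrightarrow> 3 \<le> size M' \<Longrightarrow> size M' < size M \<Longrightarrow>
      corr1 M' = corr2 M'"
  shows "corr1 M = corr2 M"
proof -
  define B where "B = size M * (\<Sum>i<N. a i)\<^sup>2"
  have "corr1 M' = corr2 M'" if "set_mset M' \<subseteq> fbasis N a" "size M' = size M" for M'
    using that
  proof (induction "B - sq_sum N M'" arbitrary: M' rule: less_induct)
    case less
    have larger: "corr1 M'' = corr2 M''"
      if "set_mset M'' \<subseteq> fbasis N a" "size M'' = size M" "sq_sum N M' < sq_sum N M''" for M''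
    proof -
      have "sq_sum N M'' \<le> B" using sq_sum_le[OF that(1)] that(2) by (simp add: B_def)
      then have "B - sq_sum N M'' < B - sq_sum N M'" using that(3) by linarith
      then show ?thesis using less.hyps that(1,2) by blast
    qed
    show ?case
      using corr_eq_induction_step[OF N a c sys1 sys2 base less.prems(1)] M less.prems smaller larger
      by simp
  qed
  then show ?thesis using M by blast
qed

theorem proposition4p7:
  fixes N :: nat and a :: "nat \<Rightarrow> nat" and c :: complex
    and corr1 corr2 :: "(nat \<Rightarrow> nat) multiset \<Rightarrow> complex"
  assumes "N \<ge> 1"
    and "\<forall>i<N. a i > 2"
    and "c \<noteq> 0"
    and "fermat_g0_system N a c corr1"
    and "fermat_g0_system N a c corr2"
    and "\<forall>j<N. corr1 {#fxpow j 1, fxpow j 1, fxpow j (a j - 2), ftop N a#}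
               = corr2 {#fxpow j 1, fxpow j 1, fxpow j (a j - 2), ftop N a#}"
  shows "\<forall>M. set_mset M \<subseteq> fbasis N a \<and> size M \<ge> 3 \<longrightarrow> corr1 M = corr2 M"
proof (intro allI impI)
  fix M assume "set_mset M \<subseteq> fbasis N a \<and> size M \<ge> 3"
  then show "corr1 M = corr2 M"
  proof (induction "size M" arbitrary: M rule: less_induct)
    case less
    show ?case
    proof (cases "size M = 3")
      case True
      then show ?thesis using corr_eq_size_3[OF assms(4,5)] less.prems by blast
    next
      case False
      then show ?thesis using corr_eq_of_agree_smaller[OF assms, of M] less by simp
    qed
  qed
qed

end
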